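(* Let $q\ge 2$ be a prime, and let $\Gamma=(V,E)$ be a complete digraph on $2q-1$ vertices with weights $w(e)\in\mathbb{Z}_q$ on its edges. Then $\Gamma$ contains a directed cycle $C$ whose total weight $\sum_{e\in C} w(e)$ is $0$ in $\mathbb{Z}_q$.
   Context: A complete digraph is a digraph in which every ordered pair $(u,v)$ of distinct vertices is joined by exactly one directed edge from $u$ to $v$ (so each pair of vertices is connected by one edge in each direction). Directed cycles may have length $2$. *)

theory Defs
  imports "HOL-Computational_Algebra.Primes"
begin

text \<open>A complete digraph on a finite vertex set V has exactly one edge (u,v) for every
ordered pair of distinct vertices; so an edge-weighting is a function w on such pairs.
Weights in Z_q are represented by integers, considered modulo q.\<close>

definition directed_cycle :: "'a set \<Rightarrow> 'a list \<Rightarrow> bool" where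
  "directed_cycle V cs \<longleftrightarrow> length cs \<ge> 2 \<and> distinct cs \<and> set cs \<subseteq> V"

definition cycle_weight :: "('a \<Rightarrow> 'a \<Rightarrow> int) \<Rightarrow> 'a list \<Rightarrow> int" where
  "cycle_weight w cs = (\<Sum>i<length cs. w (cs ! i) (cs ! ((i + 1) mod length cs)))"

end

theory Submission
  imports Defs "HOL-Number_Theory.Cong"
begin

text \<open>If some 2-cycle x, y has weight w x y + w y x divisible by q we are done, so assume
none has. Fix a vertex s and pair up the remaining 2q - 2 vertices. By induction on m, after
m pairs there is a vertex t such that the simple paths from t to s realise at least
min q (m + 1) weight residues. For a new pair {x, y}, the two possible differences between
the weights of a detour b \<rightarrow> a \<rightarrow> t and the edge b \<rightarrow> t (with {a, b} = {x, y}) add up to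
w x y + w y x, so one of them is nonzero mod q. Prepending both to the old paths translates
the old residue set R by two different amounts; since no proper nonempty subset of Z_q is
invariant under a nonzero translation, the union of the translates is larger than R unless
R is all of Z_q. After q - 1 pairs every residue occurs, in particular that of -w s t, and
closing such a path with the edge s \<rightarrow> t gives a cycle of weight 0 mod q.\<close>

fun path_weight :: "('a \<Rightarrow> 'a \<Rightarrow> int) \<Rightarrow> 'a list \<Rightarrow> int" where
  "path_weight w (x # y # l) = w x y + path_weight w (y # l)"
| "path_weight w _ = 0"

lemma path_weight_Cons: "l \<noteq> [] \<Longrightarrow> path_weight w (x # l) = w x (hd l) + path_weight w l"
  by (cases l) auto

lemma path_weight_conv_sum: "path_weight w l = (\<Sum>i<length l - 1. w (l ! i) (l ! Suc i))"
  by (induction w l rule: path_weight.induct)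
    (simp_all add: sum.lessThan_Suc_shift del: sum.lessThan_Suc)

lemma cycle_weight_conv_path_weight:
  assumes "l \<noteq> []"
  shows "cycle_weight w l = path_weight w l + w (last l) (hd l)"
proof -
  obtain k where k: "length l = Suc k" using assms by (cases l) auto
  have "cycle_weight w l = (\<Sum>i<k. w (l ! i) (l ! ((i + 1) mod Suc k))) + w (l ! k) (l ! 0)"
    by (simp add: cycle_weight_def k)
  also have "(\<Sum>i<k. w (l ! i) (l ! ((i + 1) mod Suc k))) = path_weight w l"
    unfolding path_weight_conv_sum k by (intro sum.cong) auto
  also have "l ! k = last l" using k assms by (simp add: last_conv_nth)
  also have "l ! 0 = hd l" using assms by (simp add: hd_conv_nth)
  finally show ?thesis .
qed

definition simple_paths :: "'a set \<Rightarrow> 'a \<Rightarrow> 'a \<Rightarrow> 'a list set" where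
  "simple_paths U u v = {l. distinct l \<and> set l \<subseteq> U \<and> l \<noteq> [] \<and> hd l = u \<and> last l = v}"

lemma simple_paths_mono: "U \<subseteq> U' \<Longrightarrow> simple_paths U u v \<subseteq> simple_paths U' u v"
  by (auto simp: simple_paths_def)

lemma simple_paths_same: "u \<in> U \<Longrightarrow> simple_paths U u u = {[u]}"
  by (auto simp: simple_paths_def neq_Nil_conv split: if_splits)

lemma Cons_in_simple_paths:
  "l \<in> simple_paths U u v \<Longrightarrow> x \<in> U \<Longrightarrow> x \<notin> set l \<Longrightarrow> x # l \<in> simple_paths U x v"
  by (auto simp: simple_paths_def)

lemma simple_path_directed_cycle:
  assumes "l \<in> simple_paths U u v" and "u \<noteq> v"
  shows "directed_cycle U l"
proof -
  have "length l \<noteq> 0" "length l \<noteq> 1"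
    using assms by (auto simp: simple_paths_def length_Suc_conv)
  then have "2 \<le> length l" by linarith
  then show ?thesis using assms(1) by (simp add: directed_cycle_def simple_paths_def)
qed

definition shift_mod :: "nat \<Rightarrow> int \<Rightarrow> int set \<Rightarrow> int set" where
  "shift_mod q d R = (\<lambda>r. (r + d) mod int q) ` R"

lemma shift_mod_shift_mod: "shift_mod q a (shift_mod q b R) = shift_mod q (b + a) R"
  by (simp add: shift_mod_def image_image mod_add_left_eq add.assoc)

lemma shift_mod_mono: "A \<subseteq> B \<Longrightarrow> shift_mod q d A \<subseteq> shift_mod q d B"
  unfolding shift_mod_def by (rule image_mono)

lemma shift_mod_0: "R \<subseteq> {0..<int q} \<Longrightarrow> shift_mod q 0 R = R"
  unfolding shift_mod_def by (force simp: subset_iff)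

lemma card_shift_mod:
  assumes "R \<subseteq> {0..<int q}"
  shows "card (shift_mod q d R) = card R"
  unfolding shift_mod_def
proof (rule card_image, rule inj_onI)
  fix r s assume rs: "r \<in> R" "s \<in> R" and "(r + d) mod int q = (s + d) mod int q"
  then have "r mod int q = s mod int q"
    using cong_add_rcancel[of r d s "int q"] unfolding cong_def by simp
  then show "r = s" using rs assms by (metis atLeastLessThan_iff mod_pos_pos_trivial subsetD)
qed

lemma shift_mod_closed_iterate:
  assumes "shift_mod q d R \<subseteq> R" "R \<subseteq> {0..<int q}" "r \<in> R"
  shows "(r + int k * d) mod int q \<in> R"
proof (induction k)
  case 0
  then show ?case using assms(2,3) by auto
next
  case (Suc k)
  have step: "r + int (Suc k) * d = (r + int k * d) + d" by (simp add: algebra_simps)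
  have "(r + int (Suc k) * d) mod int q = ((r + int k * d) mod int q + d) mod int q"
    unfolding step by (rule mod_add_left_eq[symmetric])
  also have "\<dots> \<in> R" using Suc assms(1) by (auto simp: shift_mod_def)
  finally show ?case .
qed

lemma shift_mod_closed_eq_residues:
  assumes "prime q" "R \<subseteq> {0..<int q}" "R \<noteq> {}" "\<not> int q dvd d" "shift_mod q d R \<subseteq> R"
  shows "R = {0..<int q}"
proof
  show "{0..<int q} \<subseteq> R"
  proof
    fix c assume c: "c \<in> {0..<int q}"
    obtain r where r: "r \<in> R" using assms(3) by blast
    have "coprime (int q) d" using assms(1,4) by (intro prime_imp_coprime) auto
    then have "gcd d (int q) dvd c - r" by (simp add: coprime_commute)
    then obtain x where x: "[d * x = c - r] (mod int q)" using cong_solve_dvd_int by blast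
    define k where "k = nat (x mod int q)"
    have "int k = x mod int q" using assms(1) by (simp add: k_def prime_gt_0_nat)
    then have k: "[int k = x] (mod int q)" by (simp add: cong_def)
    have "[r + int k * d = r + d * x] (mod int q)"
      using cong_scalar_left[OF k, of d] by (simp add: cong_add_lcancel mult.commute)
    also have "[r + d * x = c] (mod int q)"
      using x by (metis add.commute cong_add_lcancel diff_add_cancel)
    finally have "(r + int k * d) mod int q = c" using c by (simp add: cong_def)
    then show "c \<in> R" using shift_mod_closed_iterate[OF assms(5,2) r] by metis
  qed
qed (use assms(2) in simp)

lemma card_shift_mod_Un_ge:
  assumes "prime q" "R \<subseteq> {0..<int q}" "R \<noteq> {}" "\<not> int q dvd (d1 - d2)"
  shows "min q (card R + 1) \<le> card (shift_mod q d1 R \<union> shift_mod q d2 R)"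
proof (rule ccontr)
  let ?S = "shift_mod q d1 R \<union> shift_mod q d2 R"
  assume small: "\<not> ?thesis"
  have card_R: "card (shift_mod q d1 R) = card R" using assms(2) by (rule card_shift_mod)
  have "finite ?S" unfolding shift_mod_def using assms(2) finite_subset by blast
  moreover have "card ?S \<le> card (shift_mod q d1 R)" using small card_R by linarith
  ultimately have S_eq: "shift_mod q d1 R = ?S" by (intro card_seteq) auto
  then have "shift_mod q (- d1) (shift_mod q d2 R) \<subseteq> shift_mod q (- d1) (shift_mod q d1 R)"
    by (intro shift_mod_mono) blast
  then have "shift_mod q (d2 - d1) R \<subseteq> R"
    using shift_mod_0[OF assms(2)] by (simp add: shift_mod_shift_mod)
  moreover have "\<not> int q dvd (d2 - d1)" using assms(4) by (simp add: dvd_diff_commute)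
  ultimately have "R = {0..<int q}" using shift_mod_closed_eq_residues assms(1-3) by blast
  then have "card ?S = q" using S_eq card_R by simp
  then show False using small by simp
qed

definition path_weight_residues ::
    "nat \<Rightarrow> ('a \<Rightarrow> 'a \<Rightarrow> int) \<Rightarrow> 'a set \<Rightarrow> 'a \<Rightarrow> 'a \<Rightarrow> int set" where
  "path_weight_residues q w U u v = (\<lambda>l. path_weight w l mod int q) ` simple_paths U u v"

lemma path_weight_residues_subset: "0 < q \<Longrightarrow> path_weight_residues q w U u v \<subseteq> {0..<int q}"
  by (auto simp: path_weight_residues_def)

lemma path_weight_residues_same: "u \<in> U \<Longrightarrow> path_weight_residues q w U u u = {0}"
  by (simp add: path_weight_residues_def simple_paths_same)

lemma path_weight_residues_extend:
  assumes "a \<in> U" "b \<in> U" "a \<noteq> b" "a \<notin> U'" "b \<notin> U'" "U' \<subseteq> U"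
  shows "shift_mod q (w b a + w a t) (path_weight_residues q w U' t s)
       \<union> shift_mod q (w b t) (path_weight_residues q w U' t s)
       \<subseteq> path_weight_residues q w U b s"
proof -
  have "(path_weight w l mod int q + d) mod int q \<in> path_weight_residues q w U b s"
    if l: "l \<in> simple_paths U' t s" and d: "d = w b a + w a t \<or> d = w b t" for l d
  proof -
    have "l \<noteq> []" "hd l = t" "a \<notin> set l" "b \<notin> set l"
      using l assms(4,5) by (auto simp: simple_paths_def)
    moreover have "l \<in> simple_paths U t s" using l simple_paths_mono[OF assms(6)] by blast
    ultimately have "b # a # l \<in> simple_paths U b s" "b # l \<in> simple_paths U b s"
      using assms(1-3) by (auto intro!: Cons_in_simple_paths)
    moreover have "path_weight w (b # a # l) = path_weight w l + (w b a + w a t)"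
      "path_weight w (b # l) = path_weight w l + w b t"
      using \<open>l \<noteq> []\<close> \<open>hd l = t\<close> by (simp_all add: path_weight_Cons)
    ultimately obtain l' where "l' \<in> simple_paths U b s" "path_weight w l' = path_weight w l + d"
      using d by blast
    then show ?thesis unfolding path_weight_residues_def
      by (intro image_eqI[where x = l']) (simp_all add: mod_add_left_eq)
  qed
  then show ?thesis unfolding shift_mod_def path_weight_residues_def by blast
qed

lemma not_dvd_detour_difference:
  fixes n :: int
  assumes "\<not> n dvd (w x y + w y x)"
  shows "\<not> n dvd (w x y + w y t - w x t) \<or> \<not> n dvd (w y x + w x t - w y t)"
proof -
  have "(w x y + w y t - w x t) + (w y x + w x t - w y t) = w x y + w y x" by simp
  then show ?thesis using assms dvd_add[of n "w x y + w y t - w x t" "w y x + w x t - w y t"]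
    by argo
qed

lemma card_path_weight_residues_ge:
  assumes "prime q" "finite W" "s \<notin> W" "2 * m \<le> card W"
    and "\<And>x y. x \<in> W \<Longrightarrow> y \<in> W \<Longrightarrow> x \<noteq> y \<Longrightarrow> \<not> int q dvd (w x y + w y x)"
  shows "\<exists>t \<in> insert s W. min q (m + 1) \<le> card (path_weight_residues q w (insert s W) t s)"
  using assms(2-5)
proof (induction m arbitrary: W)
  case 0
  then show ?case by (auto simp: path_weight_residues_same)
next
  case (Suc m)
  obtain x y where xy: "x \<in> W" "y \<in> W" "x \<noteq> y"
    using Suc.prems(1,3) card_le_Suc0_iff_eq[of W] by fastforce
  define W' where "W' = W - {x, y}"
  have "card W' = card W - 2" using xy Suc.prems(1) by (simp add: W'_def card_Diff_subset)
  then have "finite W'" "s \<notin> W'" "2 * m \<le> card W'"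
    "\<And>x y. x \<in> W' \<Longrightarrow> y \<in> W' \<Longrightarrow> x \<noteq> y \<Longrightarrow> \<not> int q dvd (w x y + w y x)"
    using Suc.prems by (auto simp: W'_def)
  then obtain t where IH: "min q (m + 1) \<le> card (path_weight_residues q w (insert s W') t s)"
    using Suc.IH by blast
  from not_dvd_detour_difference[where w = w and t = t, OF Suc.prems(4)[OF xy]]
  obtain a b where ab: "a = x \<and> b = y \<or> a = y \<and> b = x"
    and detour: "\<not> int q dvd (w b a + w a t - w b t)"
    by blast
  have "a \<in> insert s W" "b \<in> insert s W" "a \<noteq> b" "a \<notin> insert s W'" "b \<notin> insert s W'"
    "insert s W' \<subseteq> insert s W"
    using ab xy Suc.prems(2) by (auto simp: W'_def)
  note extend = path_weight_residues_extend[OF this]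
  let ?R = "path_weight_residues q w (insert s W') t s"
  have q0: "0 < q" using assms(1) prime_gt_0_nat by blast
  have R_ne: "?R \<noteq> {}" using IH q0 by auto
  have "min q (Suc m + 1) \<le> min q (card ?R + 1)" using IH by linarith
  also have "\<dots> \<le> card (shift_mod q (w b a + w a t) ?R \<union> shift_mod q (w b t) ?R)"
    using assms(1) path_weight_residues_subset[OF q0] R_ne detour by (rule card_shift_mod_Un_ge)
  also have "\<dots> \<le> card (path_weight_residues q w (insert s W) b s)"
    using extend by (intro card_mono finite_subset[OF path_weight_residues_subset[OF q0]]) auto
  finally show ?case using ab xy by blast
qed

theorem lemma5:
  fixes V :: "'a set" and w :: "'a \<Rightarrow> 'a \<Rightarrow> int" and q :: nat
  assumes "prime q" and "finite V" and "card V = 2 * q - 1"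
  shows "\<exists>cs. directed_cycle V cs \<and> int q dvd cycle_weight w cs"
proof (rule ccontr)
  assume no_cycle: "\<not> ?thesis"
  have q2: "2 \<le> q" using assms(1) prime_ge_2_nat by blast
  have two_cycles: "\<not> int q dvd (w x y + w y x)" if "x \<in> V" "y \<in> V" "x \<noteq> y" for x y
  proof -
    have "directed_cycle V [x, y]" using that by (simp add: directed_cycle_def)
    moreover have "cycle_weight w [x, y] = w x y + w y x"
      by (simp add: cycle_weight_conv_path_weight)
    ultimately show ?thesis using no_cycle by metis
  qed
  obtain s where s: "s \<in> V" using assms(3) q2 by fastforce
  have "2 * (q - 1) \<le> card (V - {s})" using assms(2,3) s by simp
  then obtain t where big: "q \<le> card (path_weight_residues q w V t s)"
    using card_path_weight_residues_ge[of q "V - {s}" s "q - 1" w] assms(1,2) s two_cycles q2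
    by (auto simp: insert_absorb)
  have "t \<noteq> s" using big q2 s by (auto simp: path_weight_residues_same)
  have "path_weight_residues q w V t s = {0..<int q}"
    using big q2 path_weight_residues_subset[of q w V t s] by (intro card_seteq) auto
  then have "- w s t mod int q \<in> path_weight_residues q w V t s" using q2 by simp
  then obtain l where l: "- w s t mod int q = path_weight w l mod int q" "l \<in> simple_paths V t s"
    unfolding path_weight_residues_def by (rule imageE)
  have "cycle_weight w l = path_weight w l + w s t"
    using l(2) cycle_weight_conv_path_weight[of l w] by (auto simp: simple_paths_def)
  then have "int q dvd cycle_weight w l" using l(1)[symmetric] by (simp add: mod_eq_dvd_iff)
  then show False using no_cycle simple_path_directed_cycle[OF l(2) \<open>t \<noteq> s\<close>] by blast
qed

end
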